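(* Let $(\mathcal{J}_g)_{g\in[G]}$ be nonempty subsets of $[p]$, $p_g=|\mathcal{J}_g|$, $p_*=\min_gp_g$. Let $W$ be a $p\times n$ random matrix with independent $N(0,\sigma^2)$ entries and $E=\mathcal{T}(W)$. For any $\delta\in(0,1)$ and $\lambda=\sigma\bigl(1+\sqrt{2p_*^{-1}\log(1/\delta)}\bigr)$, \[ \mathbb{P}(\|E\|_{\mathrm{grp}*}>\lambda)\le(n-1)G\delta. \]
   Context: CUSUM transformation $\mathcal{T}:\mathbb{R}^{p\times n}\to\mathbb{R}^{p\times(n-1)}$: $\mathcal{T}(M)_{j,t}=\sqrt{t(n-t)/n}\bigl(\frac{1}{n-t}\sum_{r=t+1}^nM_{j,r}-\frac1t\sum_{r=1}^tM_{j,r}\bigr)$. $\|R\|_{\mathrm{grp}*}=\max_{g\in[G]}\max_{t\in[n-1]}p_g^{-1/2}\|R_{\mathcal{J}_g,t}\|_2$, where $R_{\mathcal{J}_g,t}$ is the vector of entries of the $t$th column of $R$ with rows in $\mathcal{J}_g$. *)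

theory Defs
  imports "HOL-Probability.Probability"
begin

text \<open>Matrices are functions nat => nat => real, rows indexed 1..p, columns 1..n.\<close>

definition cusum :: "nat \<Rightarrow> (nat \<Rightarrow> nat \<Rightarrow> real) \<Rightarrow> nat \<Rightarrow> nat \<Rightarrow> real" where
  "cusum n M j t =
     sqrt (real t * real (n - t) / real n) *
       ((1 / real (n - t)) * (\<Sum>r\<in>{t+1..n}. M j r) - (1 / real t) * (\<Sum>r\<in>{1..t}. M j r))"

definition grp_star_norm :: "(nat \<Rightarrow> nat set) \<Rightarrow> nat \<Rightarrow> nat \<Rightarrow> (nat \<Rightarrow> nat \<Rightarrow> real) \<Rightarrow> real" where
  "grp_star_norm J G n R =
     Max {(1 / sqrt (real (card (J g)))) * sqrt (\<Sum>j\<in>J g. (R j t)\<^sup>2) | g t. g \<in> {1..G} \<and> t \<in> {1..n-1}}"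

end

theory Submission
  imports Defs
begin

(* For fixed t, every entry E j t of the CUSUM transform is a linear combination of row j of W
   whose weights have unit Euclidean norm, and different rows use disjoint sets of entries of W.
   Hence the column (E j t)_j again has independent N(0, sigma^2) entries, and for each group g
   the sum of E j t ^ 2 over J g is sigma^2 times a chi-square variable with p_g degrees of freedom.
   A Chernoff bound, based on E exp (a X^2) = (1 - 2 a sigma^2)^(-1/2) for X ~ N(0, sigma^2), gives
   P(sum > sigma^2 p_g (1 + u)^2) <= exp (- p_g u^2 / 2); the choice u = sqrt (2 log (1/delta) / p_g),
   which is at most sqrt (2 log (1/delta) / p_star), makes this delta, and a union bound over the
   G (n - 1) pairs (g, t) finishes the proof. *)

lemma normal_density_mult_exp_sq:
  fixes \<sigma> a x :: real
  assumes "\<sigma> > 0" "2 * a * \<sigma>\<^sup>2 < 1"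
  shows "normal_density 0 \<sigma> x * exp (a * x\<^sup>2) =
         normal_density 0 (\<sigma> / sqrt (1 - 2 * a * \<sigma>\<^sup>2)) x / sqrt (1 - 2 * a * \<sigma>\<^sup>2)"
proof -
  define b where "b = 1 - 2 * a * \<sigma>\<^sup>2"
  have b: "b > 0" using assms by (simp add: b_def)
  have exponent: "- x\<^sup>2 / (2 * \<sigma>\<^sup>2) + a * x\<^sup>2 = - x\<^sup>2 / (2 * (\<sigma> / sqrt b)\<^sup>2)"
    using b assms by (simp add: power_divide b_def field_simps)
  have "normal_density 0 \<sigma> x * exp (a * x\<^sup>2) =
      exp (- x\<^sup>2 / (2 * \<sigma>\<^sup>2) + a * x\<^sup>2) / sqrt (2 * pi * \<sigma>\<^sup>2)"
    by (simp add: normal_density_def mult_exp_exp)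
  also have "\<dots> = exp (- x\<^sup>2 / (2 * (\<sigma> / sqrt b)\<^sup>2)) / sqrt (2 * pi * \<sigma>\<^sup>2)"
    by (simp only: exponent)
  also have "\<dots> = normal_density 0 (\<sigma> / sqrt b) x / sqrt b"
    using b by (simp add: normal_density_def power_divide real_sqrt_divide)
  finally show ?thesis by (simp add: b_def)
qed

lemma normal_integral_exp_sq:
  assumes X: "distributed M lborel X (normal_density 0 \<sigma>)" and "\<sigma> > 0" "2 * a * \<sigma>\<^sup>2 < 1"
  shows "integrable M (\<lambda>\<omega>. exp (a * (X \<omega>)\<^sup>2))"
    and "(\<integral>\<omega>. exp (a * (X \<omega>)\<^sup>2) \<partial>M) = 1 / sqrt (1 - 2 * a * \<sigma>\<^sup>2)"
proof -
  have density: "(\<lambda>x. normal_density 0 \<sigma> x * exp (a * x\<^sup>2)) =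
      (\<lambda>x. normal_density 0 (\<sigma> / sqrt (1 - 2 * a * \<sigma>\<^sup>2)) x / sqrt (1 - 2 * a * \<sigma>\<^sup>2))"
    using normal_density_mult_exp_sq[OF assms(2,3)] by auto
  have "integrable lborel (\<lambda>x. normal_density 0 \<sigma> x * exp (a * x\<^sup>2))"
    unfolding density using assms by (intro integrable_divide integrable_normal_density) simp
  then show "integrable M (\<lambda>\<omega>. exp (a * (X \<omega>)\<^sup>2))"
    using distributed_integrable[OF X, of "\<lambda>x. exp (a * x\<^sup>2)"] by simp
  have "(\<integral>x. normal_density 0 \<sigma> x * exp (a * x\<^sup>2) \<partial>lborel) = 1 / sqrt (1 - 2 * a * \<sigma>\<^sup>2)"
    unfolding density using assms by simp
  then show "(\<integral>\<omega>. exp (a * (X \<omega>)\<^sup>2) \<partial>M) = 1 / sqrt (1 - 2 * a * \<sigma>\<^sup>2)"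
    using distributed_integral[OF X, of "\<lambda>x. exp (a * x\<^sup>2)"] by simp
qed

lemma (in prob_space) indep_normal_integral_exp_sum_sq:
  assumes K: "finite K" and indep: "indep_vars (\<lambda>_. borel) Y K"
    and normal: "\<And>j. j \<in> K \<Longrightarrow> distributed M lborel (Y j) (normal_density 0 \<sigma>)"
    and "\<sigma> > 0" "2 * a * \<sigma>\<^sup>2 < 1"
  shows "integrable M (\<lambda>\<omega>. exp (a * (\<Sum>j\<in>K. (Y j \<omega>)\<^sup>2)))"
    and "(\<integral>\<omega>. exp (a * (\<Sum>j\<in>K. (Y j \<omega>)\<^sup>2)) \<partial>M) = (1 / sqrt (1 - 2 * a * \<sigma>\<^sup>2)) ^ card K"
proof -
  have prod: "exp (a * (\<Sum>j\<in>K. (Y j \<omega>)\<^sup>2)) = (\<Prod>j\<in>K. exp (a * (Y j \<omega>)\<^sup>2))" for \<omega>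
    by (simp add: sum_distrib_left exp_sum[OF K])
  have indep_exp: "indep_vars (\<lambda>_. borel) (\<lambda>j \<omega>. exp (a * (Y j \<omega>)\<^sup>2)) K"
    by (rule indep_vars_compose2[OF indep]) simp
  note factor = normal_integral_exp_sq[OF normal \<open>\<sigma> > 0\<close> \<open>2 * a * \<sigma>\<^sup>2 < 1\<close>]
  show "integrable M (\<lambda>\<omega>. exp (a * (\<Sum>j\<in>K. (Y j \<omega>)\<^sup>2)))"
    unfolding prod by (rule indep_vars_integrable[OF K indep_exp factor(1)])
  show "(\<integral>\<omega>. exp (a * (\<Sum>j\<in>K. (Y j \<omega>)\<^sup>2)) \<partial>M) = (1 / sqrt (1 - 2 * a * \<sigma>\<^sup>2)) ^ card K"
    unfolding prod using indep_vars_lebesgue_integral[OF K indep_exp factor(1)] factor(2) by simp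
qed

lemma (in prob_space) chi_square_upper_tail:
  fixes Y :: "'i \<Rightarrow> 'a \<Rightarrow> real" and \<sigma> u :: real
  assumes K: "finite K" and indep: "indep_vars (\<lambda>_. borel) Y K"
    and normal: "\<And>j. j \<in> K \<Longrightarrow> distributed M lborel (Y j) (normal_density 0 \<sigma>)"
    and \<sigma>: "\<sigma> > 0" and u: "u \<ge> 0"
  defines "E \<equiv> {\<omega>\<in>space M. \<sigma>\<^sup>2 * card K * (1 + u)\<^sup>2 < (\<Sum>j\<in>K. (Y j \<omega>)\<^sup>2)}"
  shows "E \<in> events" and "prob E \<le> exp (- real (card K) * u\<^sup>2 / 2)"
proof -
  have [measurable]: "Y j \<in> borel_measurable M" if "j \<in> K" for j
    using distributed_measurable[OF normal[OF that]] by simp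
  show "E \<in> events"
    unfolding E_def by measurable
  define k where "k = real (card K)"
  \<comment> \<open>Chernoff bound, with \<open>a\<close> chosen so that each factor \<open>exp (a * (Y j \<omega>)\<^sup>2)\<close> has mean \<open>1 + u\<close>.\<close>
  define a where "a = (1 - 1 / (1 + u)\<^sup>2) / (2 * \<sigma>\<^sup>2)"
  define c where "c = exp (a * (\<sigma>\<^sup>2 * k * (1 + u)\<^sup>2))"
  have a_var: "1 - 2 * a * \<sigma>\<^sup>2 = 1 / (1 + u)\<^sup>2"
    using \<sigma> by (simp add: a_def field_simps)
  moreover have "0 < 1 / (1 + u)\<^sup>2"
    using u by simp
  ultimately have a_lt: "2 * a * \<sigma>\<^sup>2 < 1"
    by linarith
  note mgf = indep_normal_integral_exp_sum_sq[OF K indep normal \<sigma> a_lt]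
  have "a \<ge> 0"
    using u \<sigma> by (simp add: a_def field_simps)
  then have "E \<subseteq> {\<omega>\<in>space M. c \<le> exp (a * (\<Sum>j\<in>K. (Y j \<omega>)\<^sup>2))}"
    by (auto simp: E_def c_def k_def intro: mult_left_mono)
  then have "prob E \<le> prob {\<omega>\<in>space M. c \<le> exp (a * (\<Sum>j\<in>K. (Y j \<omega>)\<^sup>2))}"
    by (rule finite_measure_mono) measurable
  also have "\<dots> \<le> (\<integral>\<omega>. exp (a * (\<Sum>j\<in>K. (Y j \<omega>)\<^sup>2)) \<partial>M) / c"
    by (rule integral_Markov_inequality_measure[of _ _ "space M"]) (auto simp: c_def mgf(1))
  also have "\<dots> = (1 + u) ^ card K / exp (k * (2 * u + u\<^sup>2) / 2)"
  proof -
    have "a * (\<sigma>\<^sup>2 * k * (1 + u)\<^sup>2) = k * ((1 + u)\<^sup>2 - 1) / 2"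
      using \<sigma> u by (simp add: a_def field_simps)
    also have "\<dots> = k * (2 * u + u\<^sup>2) / 2"
      by (simp add: power2_eq_square algebra_simps)
    finally have "a * (\<sigma>\<^sup>2 * k * (1 + u)\<^sup>2) = k * (2 * u + u\<^sup>2) / 2" .
    moreover have "1 / sqrt (1 - 2 * a * \<sigma>\<^sup>2) = 1 + u"
      using u by (simp add: a_var real_sqrt_divide)
    ultimately show ?thesis
      by (simp add: c_def mgf(2))
  qed
  also have "\<dots> \<le> exp u ^ card K / exp (k * (2 * u + u\<^sup>2) / 2)"
    using u by (intro divide_right_mono power_mono) (auto simp: add.commute)
  also have "\<dots> = exp (- real (card K) * u\<^sup>2 / 2)"
    by (simp add: k_def exp_of_nat_mult[symmetric] exp_diff[symmetric] field_simps power2_eq_square)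
  finally show "prob E \<le> exp (- real (card K) * u\<^sup>2 / 2)" .
qed

lemma (in prob_space) chi_square_upper_tail_log:
  fixes Y :: "'i \<Rightarrow> 'a \<Rightarrow> real" and \<sigma> \<delta> :: real
  assumes K: "finite K" "K \<noteq> {}" and indep: "indep_vars (\<lambda>_. borel) Y K"
    and normal: "\<And>j. j \<in> K \<Longrightarrow> distributed M lborel (Y j) (normal_density 0 \<sigma>)"
    and \<sigma>: "\<sigma> > 0" and \<delta>: "0 < \<delta>" "\<delta> \<le> 1"
  defines "E \<equiv> {\<omega>\<in>space M.
      \<sigma>\<^sup>2 * card K * (1 + sqrt (2 * ln (1 / \<delta>) / card K))\<^sup>2 < (\<Sum>j\<in>K. (Y j \<omega>)\<^sup>2)}"
  shows "E \<in> events" and "prob E \<le> \<delta>"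
proof -
  define u where "u = sqrt (2 * ln (1 / \<delta>) / card K)"
  have "ln (1 / \<delta>) \<ge> 0"
    using \<delta> by simp
  then have u: "u \<ge> 0" "real (card K) * u\<^sup>2 / 2 = ln (1 / \<delta>)"
    using K by (simp_all add: u_def)
  have E_eq: "E = {\<omega>\<in>space M. \<sigma>\<^sup>2 * card K * (1 + u)\<^sup>2 < (\<Sum>j\<in>K. (Y j \<omega>)\<^sup>2)}"
    by (simp only: E_def u_def)
  note tail = chi_square_upper_tail[OF K(1) indep normal \<sigma> u(1)]
  show "E \<in> events"
    unfolding E_eq by (rule tail(1))
  have "prob E \<le> exp (- real (card K) * u\<^sup>2 / 2)"
    unfolding E_eq by (rule tail(2))
  also have "\<dots> = \<delta>"
    using \<delta> u(2) by (simp add: ln_div)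
  finally show "prob E \<le> \<delta>" .
qed

lemma (in prob_space) indep_normal_unit_weighted_sum:
  fixes X :: "'i \<Rightarrow> 'a \<Rightarrow> real" and c :: "'i \<Rightarrow> real"
  assumes I: "finite I" and indep: "indep_vars (\<lambda>_. borel) X I"
    and normal: "\<And>i. i \<in> I \<Longrightarrow> distributed M lborel (X i) (normal_density 0 \<sigma>)"
    and \<sigma>: "\<sigma> > 0" and unit: "(\<Sum>i\<in>I. (c i)\<^sup>2) = 1"
  shows "distributed M lborel (\<lambda>\<omega>. \<Sum>i\<in>I. c i * X i \<omega>) (normal_density 0 \<sigma>)"
proof -
  \<comment> \<open>\<open>normal_density_affine\<close> needs a nonzero coefficient, so zero weights are dropped first.\<close>
  define I' where "I' = {i\<in>I. c i \<noteq> 0}"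
  have I': "finite I'" "I' \<subseteq> I"
    using I by (auto simp: I'_def)
  have restrict: "(\<Sum>i\<in>I. f i) = (\<Sum>i\<in>I'. f i)" if "\<And>i. c i = 0 \<Longrightarrow> f i = 0" for f :: "'i \<Rightarrow> real"
    using I that by (intro sum.mono_neutral_right) (auto simp: I'_def)
  have unit': "(\<Sum>i\<in>I'. (c i)\<^sup>2) = 1"
    using unit restrict[of "\<lambda>i. (c i)\<^sup>2"] by simp
  then have "I' \<noteq> {}"
    by auto
  have "indep_vars (\<lambda>_. borel) (\<lambda>i \<omega>. c i * X i \<omega>) I'"
    by (rule indep_vars_compose2[OF indep_vars_subset[OF indep I'(2)]]) simp
  moreover have "distributed M lborel (\<lambda>\<omega>. c i * X i \<omega>) (normal_density 0 (\<bar>c i\<bar> * \<sigma>))"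
    if "i \<in> I'" for i
    using normal_density_affine[OF normal \<sigma>, of i "c i" 0] that by (simp add: I'_def)
  ultimately have "distributed M lborel (\<lambda>\<omega>. \<Sum>i\<in>I'. c i * X i \<omega>)
      (normal_density (\<Sum>i\<in>I'. 0) (sqrt (\<Sum>i\<in>I'. (\<bar>c i\<bar> * \<sigma>)\<^sup>2)))"
    using \<sigma> by (intro sum_indep_normal[OF I'(1) \<open>I' \<noteq> {}\<close>]) (auto simp: I'_def)
  moreover have "sqrt (\<Sum>i\<in>I'. (\<bar>c i\<bar> * \<sigma>)\<^sup>2) = \<sigma>"
    using \<sigma> unit' by (simp add: power_mult_distrib sum_distrib_right[symmetric])
  ultimately show ?thesis
    using restrict[of "\<lambda>i. c i * X i _"] by simp
qed

definition cusum_weight :: "nat \<Rightarrow> nat \<Rightarrow> nat \<Rightarrow> real" where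
  "cusum_weight n t r =
     sqrt (real t * real (n - t) / real n) * (if r \<le> t then - 1 / real t else 1 / real (n - t))"

lemma cusum_eq_sum_weight: "cusum n A j t = (\<Sum>r\<in>{1..n}. cusum_weight n t r * A j r)"
proof (cases "t \<le> n")
  case True
  then have split: "{1..n} = {1..t} \<union> {t+1..n}"
    by auto
  have "(\<Sum>r\<in>{1..n}. cusum_weight n t r * A j r) =
      (\<Sum>r\<in>{1..t}. cusum_weight n t r * A j r) + (\<Sum>r\<in>{t+1..n}. cusum_weight n t r * A j r)"
    unfolding split by (rule sum.union_disjoint) auto
  also have "\<dots> = sqrt (real t * real (n - t) / real n) *
      (- 1 / real t * (\<Sum>r\<in>{1..t}. A j r) + 1 / real (n - t) * (\<Sum>r\<in>{t+1..n}. A j r))"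
    by (simp add: cusum_weight_def sum_distrib_left distrib_left mult.assoc)
  finally show ?thesis
    by (simp add: cusum_def algebra_simps)
next
  case False
  then show ?thesis
    by (simp add: cusum_def cusum_weight_def)
qed

lemma sum_cusum_weight_sq:
  assumes "0 < t" "t < n"
  shows "(\<Sum>r\<in>{1..n}. (cusum_weight n t r)\<^sup>2) = 1"
proof -
  define c where "c = real t * real (n - t) / real n"
  have split: "{1..n} = {1..t} \<union> {t+1..n}"
    using assms by auto
  have "(\<Sum>r\<in>{1..n}. (cusum_weight n t r)\<^sup>2) =
      (\<Sum>r\<in>{1..t}. (cusum_weight n t r)\<^sup>2) + (\<Sum>r\<in>{t+1..n}. (cusum_weight n t r)\<^sup>2)"
    unfolding split by (rule sum.union_disjoint) auto
  also have "\<dots> = real t * (c / (real t)\<^sup>2) + real (n - t) * (c / (real (n - t))\<^sup>2)"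
    using assms by (simp add: cusum_weight_def c_def power_mult_distrib power_divide)
  also have "\<dots> = real (n - t) / real n + real t / real n"
    using assms by (simp add: c_def power2_eq_square)
  also have "\<dots> = 1"
    using assms by (simp add: of_nat_diff add_divide_distrib[symmetric])
  finally show ?thesis .
qed

lemma (in prob_space) cusum_distributed_normal:
  fixes W :: "'a \<Rightarrow> nat \<Rightarrow> nat \<Rightarrow> real"
  assumes indep: "indep_vars (\<lambda>_. borel) (\<lambda>(j, r) \<omega>. W \<omega> j r) ({1..p} \<times> {1..n})"
    and normal: "\<And>j r. j \<in> {1..p} \<Longrightarrow> r \<in> {1..n} \<Longrightarrow>
           distributed M lborel (\<lambda>\<omega>. W \<omega> j r) (normal_density 0 \<sigma>)"
    and \<sigma>: "\<sigma> > 0" and t: "0 < t" "t < n" and j: "j \<in> {1..p}"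
  shows "distributed M lborel (\<lambda>\<omega>. cusum n (W \<omega>) j t) (normal_density 0 \<sigma>)"
proof -
  have row: "{j} \<times> {1..n} \<subseteq> {1..p} \<times> {1..n}"
    using j by auto
  have sum_row: "(\<Sum>x\<in>{j} \<times> {1..n}. f x) = (\<Sum>r\<in>{1..n}. f (j, r))" for f :: "nat \<times> nat \<Rightarrow> real"
  proof -
    have "{j} \<times> {1..n} = Pair j ` {1..n}"
      by auto
    then show ?thesis
      by (simp add: sum.reindex inj_on_def)
  qed
  have unit: "(\<Sum>x\<in>{j} \<times> {1..n}. (case x of (i, r) \<Rightarrow> cusum_weight n t r)\<^sup>2) = 1"
    using sum_cusum_weight_sq[OF t] by (simp only: sum_row prod.case)
  have "distributed M lborel
      (\<lambda>\<omega>. \<Sum>x\<in>{j} \<times> {1..n}. (case x of (i, r) \<Rightarrow> cusum_weight n t r) * (case x of (i, r) \<Rightarrow> \<lambda>\<omega>. W \<omega> i r) \<omega>)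
      (normal_density 0 \<sigma>)"
    using row normal \<sigma>
    by (intro indep_normal_unit_weighted_sum[OF _ indep_vars_subset[OF indep row]] unit) auto
  then show ?thesis
    by (simp only: sum_row prod.case cusum_eq_sum_weight)
qed

lemma (in prob_space) cusum_column_indep_vars:
  fixes W :: "'a \<Rightarrow> nat \<Rightarrow> nat \<Rightarrow> real"
  assumes indep: "indep_vars (\<lambda>_. borel) (\<lambda>(j, r) \<omega>. W \<omega> j r) ({1..p} \<times> {1..n})"
  shows "indep_vars (\<lambda>_. borel) (\<lambda>j \<omega>. cusum n (W \<omega>) j t) {1..p}"
proof -
  define X where "X = (\<lambda>(j, r) \<omega>. W \<omega> j r :: real)"
  have "indep_vars (\<lambda>j. PiM ({j} \<times> {1..n}) (\<lambda>_. borel))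
      (\<lambda>j \<omega>. restrict (\<lambda>i. X i \<omega>) ({j} \<times> {1..n})) {1..p}"
    by (rule indep_vars_restrict[OF indep[folded X_def]]) (auto simp: disjoint_family_on_def)
  then have "indep_vars (\<lambda>_. borel)
      (\<lambda>j \<omega>. (\<lambda>f. \<Sum>r\<in>{1..n}. cusum_weight n t r * f (j, r)) (restrict (\<lambda>i. X i \<omega>) ({j} \<times> {1..n})))
      {1..p}"
    by (rule indep_vars_compose2) measurable
  then show ?thesis
    by (rule iffD1[OF indep_vars_cong, rotated 3]) (auto simp: X_def cusum_eq_sum_weight)
qed

lemma (in prob_space) cusum_group_upper_tail:
  fixes W :: "'a \<Rightarrow> nat \<Rightarrow> nat \<Rightarrow> real" and \<sigma> \<delta> :: real
  assumes indep: "indep_vars (\<lambda>_. borel) (\<lambda>(j, r) \<omega>. W \<omega> j r) ({1..p} \<times> {1..n})"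
    and normal: "\<And>j r. j \<in> {1..p} \<Longrightarrow> r \<in> {1..n} \<Longrightarrow>
           distributed M lborel (\<lambda>\<omega>. W \<omega> j r) (normal_density 0 \<sigma>)"
    and \<sigma>: "\<sigma> > 0" and t: "0 < t" "t < n" and K: "K \<subseteq> {1..p}" "K \<noteq> {}"
    and \<delta>: "0 < \<delta>" "\<delta> \<le> 1"
  defines "E \<equiv> {\<omega>\<in>space M. \<sigma>\<^sup>2 * card K * (1 + sqrt (2 * ln (1 / \<delta>) / card K))\<^sup>2
      < (\<Sum>j\<in>K. (cusum n (W \<omega>) j t)\<^sup>2)}"
  shows "E \<in> events" and "prob E \<le> \<delta>"
proof -
  have finite: "finite K"
    using K(1) by (rule finite_subset) simp
  have cusum_normal: "distributed M lborel (\<lambda>\<omega>. cusum n (W \<omega>) j t) (normal_density 0 \<sigma>)" if "j \<in> K" for j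
    using K(1) that by (intro cusum_distributed_normal[OF indep normal \<sigma> t]) auto
  note tail = chi_square_upper_tail_log[OF finite K(2)
      indep_vars_subset[OF cusum_column_indep_vars[OF indep] K(1)] cusum_normal \<sigma> \<delta>]
  show "E \<in> events"
    unfolding E_def by (rule tail(1))
  show "prob E \<le> \<delta>"
    unfolding E_def by (rule tail(2))
qed

lemma (in prob_space) prob_le_of_finite_cover:
  fixes \<delta> :: real
  assumes "finite I" "A \<subseteq> (\<Union>i\<in>I. B i)"
    and "\<And>i. i \<in> I \<Longrightarrow> B i \<in> events" "\<And>i. i \<in> I \<Longrightarrow> prob (B i) \<le> \<delta>"
  shows "prob A \<le> card I * \<delta>"
proof -
  have "prob A \<le> prob (\<Union>i\<in>I. B i)"
    using assms by (intro finite_measure_mono sets.finite_UN) auto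
  also have "\<dots> \<le> (\<Sum>i\<in>I. prob (B i))"
    using assms by (intro measure_UNION_le) auto
  also have "\<dots> \<le> card I * \<delta>"
    using assms by (intro sum_bounded_above) auto
  finally show ?thesis .
qed

lemma less_grp_star_norm_iff:
  assumes "G \<ge> 1" "n \<ge> 2"
  shows "c < grp_star_norm J G n R \<longleftrightarrow>
    (\<exists>g\<in>{1..G}. \<exists>t\<in>{1..n-1}. c < 1 / sqrt (card (J g)) * sqrt (\<Sum>j\<in>J g. (R j t)\<^sup>2))"
proof -
  let ?S = "{1 / sqrt (card (J g)) * sqrt (\<Sum>j\<in>J g. (R j t)\<^sup>2) | g t. g \<in> {1..G} \<and> t \<in> {1..n-1}}"
  have "finite ?S"
    by (rule finite_image_set2) auto
  moreover have "?S \<noteq> {}"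
    using assms by fastforce
  ultimately show ?thesis
    unfolding grp_star_norm_def Max_gr_iff[OF \<open>finite ?S\<close> \<open>?S \<noteq> {}\<close>] by blast
qed

lemma grp_star_norm_exceeds_imp_group_exceeds:
  fixes \<sigma> L :: real
  assumes "G \<ge> 1" "n \<ge> 2"
    and finite: "\<And>g. g \<in> {1..G} \<Longrightarrow> finite (J g)" and nonempty: "\<And>g. g \<in> {1..G} \<Longrightarrow> J g \<noteq> {}"
    and "\<sigma> > 0" "L \<ge> 0"
    and exceeds: "\<sigma> * (1 + sqrt (2 * L / Min ((\<lambda>g. card (J g)) ` {1..G}))) < grp_star_norm J G n R"
  obtains g t where "g \<in> {1..G}" "t \<in> {1..n-1}"
    and "\<sigma>\<^sup>2 * card (J g) * (1 + sqrt (2 * L / card (J g)))\<^sup>2 < (\<Sum>j\<in>J g. (R j t)\<^sup>2)"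
proof -
  obtain g t where gt: "g \<in> {1..G}" "t \<in> {1..n-1}" and
    less: "\<sigma> * (1 + sqrt (2 * L / Min ((\<lambda>g. card (J g)) ` {1..G})))
      < 1 / sqrt (card (J g)) * sqrt (\<Sum>j\<in>J g. (R j t)\<^sup>2)"
    using exceeds less_grp_star_norm_iff[OF assms(1,2)] by blast
  define k where "k = real (card (J g))"
  define c where "c = \<sigma> * (1 + sqrt (2 * L / k))"
  have k: "k > 0"
    using finite[OF gt(1)] nonempty[OF gt(1)] by (simp add: k_def card_gt_0_iff)
  have "0 < Min ((\<lambda>g. card (J g)) ` {1..G})"
    using finite nonempty assms(1) by (auto simp: Min_gr_iff card_gt_0_iff)
  moreover have "Min ((\<lambda>g. card (J g)) ` {1..G}) \<le> card (J g)"
    using gt(1) by simp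
  ultimately have "sqrt (2 * L / k) \<le> sqrt (2 * L / Min ((\<lambda>g. card (J g)) ` {1..G}))"
    using \<open>L \<ge> 0\<close> by (simp add: k_def frac_le)
  then have "c \<le> \<sigma> * (1 + sqrt (2 * L / Min ((\<lambda>g. card (J g)) ` {1..G})))"
    using \<open>\<sigma> > 0\<close> by (simp add: c_def)
  with less have "c < sqrt (\<Sum>j\<in>J g. (R j t)\<^sup>2) / sqrt k"
    by (simp add: k_def)
  then have "c * sqrt k < sqrt (\<Sum>j\<in>J g. (R j t)\<^sup>2)"
    using k by (simp add: less_divide_eq)
  moreover have "c * sqrt k \<ge> 0"
    using \<open>\<sigma> > 0\<close> \<open>L \<ge> 0\<close> k by (simp add: c_def)
  ultimately have "(c * sqrt k)\<^sup>2 < (sqrt (\<Sum>j\<in>J g. (R j t)\<^sup>2))\<^sup>2"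
    by (intro power_strict_mono) auto
  also have "\<dots> = (\<Sum>j\<in>J g. (R j t)\<^sup>2)"
    by (simp add: sum_nonneg)
  finally have "(c * sqrt k)\<^sup>2 < (\<Sum>j\<in>J g. (R j t)\<^sup>2)" .
  then show ?thesis
    using that gt k by (simp add: c_def k_def power_mult_distrib mult_ac)
qed

theorem mainTheorem9:
  fixes M :: "'a measure" and W :: "'a \<Rightarrow> nat \<Rightarrow> nat \<Rightarrow> real"
    and J :: "nat \<Rightarrow> nat set" and p n G :: nat and \<sigma> \<delta> :: real
  assumes "prob_space M"
    and "n \<ge> 2" and "G \<ge> 1"
    and "\<And>g. g \<in> {1..G} \<Longrightarrow> J g \<subseteq> {1..p} \<and> J g \<noteq> {}"
    and "\<sigma> > 0"
    and "prob_space.indep_vars M (\<lambda>_. borel) (\<lambda>(j, t) \<omega>. W \<omega> j t) ({1..p} \<times> {1..n})"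
    and "\<And>j t. j \<in> {1..p} \<Longrightarrow> t \<in> {1..n} \<Longrightarrow>
           distributed M lborel (\<lambda>\<omega>. W \<omega> j t) (normal_density 0 \<sigma>)"
    and "0 < \<delta>" and "\<delta> < 1"
  shows "measure M {\<omega> \<in> space M.
            grp_star_norm J G n (cusum n (W \<omega>)) >
              \<sigma> * (1 + sqrt (2 * ln (1 / \<delta>) / real (Min ((\<lambda>g. card (J g)) ` {1..G}))))}
         \<le> real (n - 1) * real G * \<delta>"
proof -
  interpret prob_space M by fact
  define lam where
    "lam = \<sigma> * (1 + sqrt (2 * ln (1 / \<delta>) / real (Min ((\<lambda>g. card (J g)) ` {1..G}))))"
  define B where "B x = {\<omega>\<in>space M. \<sigma>\<^sup>2 * card (J (fst x)) *
      (1 + sqrt (2 * ln (1 / \<delta>) / card (J (fst x))))\<^sup>2 < (\<Sum>j\<in>J (fst x). (cusum n (W \<omega>) j (snd x))\<^sup>2)}"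
    for x
  have J: "finite (J g)" "J g \<noteq> {}" "J g \<subseteq> {1..p}" if "g \<in> {1..G}" for g
    using assms(4)[OF that] finite_subset[of "J g" "{1..p}"] by auto
  have B: "B x \<in> events" "prob (B x) \<le> \<delta>" if "x \<in> {1..G} \<times> {1..n-1}" for x
  proof -
    have g: "fst x \<in> {1..G}" and t: "0 < snd x" "snd x < n"
      using that assms(2) by auto
    note tail = cusum_group_upper_tail[OF assms(6,7,5) t J(3,2)[OF g] assms(8) less_imp_le[OF assms(9)]]
    show "B x \<in> events"
      unfolding B_def by (rule tail(1))
    show "prob (B x) \<le> \<delta>"
      unfolding B_def by (rule tail(2))
  qed
  have "ln (1 / \<delta>) \<ge> 0"
    using assms(8,9) by simp
  have "{\<omega>\<in>space M. grp_star_norm J G n (cusum n (W \<omega>)) > lam} \<subseteq> (\<Union>x\<in>{1..G} \<times> {1..n-1}. B x)"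
  proof safe
    fix \<omega>
    assume \<omega>: "\<omega> \<in> space M" and exceeds: "grp_star_norm J G n (cusum n (W \<omega>)) > lam"
    obtain g t where "(g, t) \<in> {1..G} \<times> {1..n-1}" and "\<sigma>\<^sup>2 * card (J g) *
        (1 + sqrt (2 * ln (1 / \<delta>) / card (J g)))\<^sup>2 < (\<Sum>j\<in>J g. (cusum n (W \<omega>) j t)\<^sup>2)"
      using grp_star_norm_exceeds_imp_group_exceeds[OF assms(3,2) J(1,2) assms(5)
          \<open>ln (1 / \<delta>) \<ge> 0\<close> exceeds[unfolded lam_def]] by blast
    with \<omega> show "\<omega> \<in> (\<Union>x\<in>{1..G} \<times> {1..n-1}. B x)"
      by (intro UN_I[of "(g, t)"]) (simp_all add: B_def)
  qed
  then have "prob {\<omega>\<in>space M. grp_star_norm J G n (cusum n (W \<omega>)) > lam}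
      \<le> card ({1..G} \<times> {1..n-1}) * \<delta>"
    using B by (intro prob_le_of_finite_cover) auto
  then show ?thesis
    by (simp add: lam_def mult.commute)
qed

end
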